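(* Let $R$, $G$, $*$, $\sigma$ and $\mathcal{S}$ be as in the context, and suppose $\mathcal{S}$ is anticommutative. Let $x,y\in G_*$ and $\alpha,\beta\in R$ with $\alpha x\in\mathcal{S}$ and $\beta y\in\mathcal{S}$. Then: - (i) $xy=yx$ if and only if $xy\in G_*$; - (ii) if $xy\neq yx$, then $\alpha\beta=0$; if $xy=yx$, then $2\alpha\beta=0$; - (iii) $(x,y^2)=(x^2,y)=1$.
   Context: Throughout, $R$ is a commutative ring with unity with $\operatorname{char}(R)\neq 2$, and $\mathcal{U}(R)$ is its unit group. $G$ is a group with an involution $*$, i.e. a map $x\mapsto x^*$ with $(xy)^*=y^*x^*$ and $(x^* )^*=x$. The map $\sigma:G\to\mathcal{U}(R)$ is a nontrivial group homomorphism with kernel $N=\ker\sigma$, and it is compatible with $*$: $xx^*\in N$ for all $x\in G$. The group ring $RG$ carries the involution $\left(\sum_{x\in G}\alpha_x x\right)^{\sigma*}=\sum_{x\in G}\sigma(x)\alpha_x x^*$. Write $G_*=\{x\in G: x^*=x\}$ and $N_*=G_*\cap N$. Let $\mathcal{S}$ be the $R$-submodule of $RG$ spanned by the union of the following three sets: - $2\mathcal{S}_1=\{2x: x\in N_*\}$; - $\mathcal{S}_2=\{\alpha x: x\in G_*\setminus N,\ \alpha\in R,\ \alpha(1-\sigma(x))=0\}$; - $\mathcal{S}_3=\{x+\sigma(x)x^*: x\in G\setminus G_*\}$. $\mathcal{S}$ is called anticommutative if $ab+ba=0$ for all $a,b\in\mathcal{S}$. The commutator is $(x,y)=x^{-1}y^{-1}xy$.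 *)

theory Defs
  imports "HOL-Algebra.Group"
begin

text \<open>Elements of the group ring RG are modelled as functions g => r
  (finitely supported on the carrier for all elements we use).\<close>

definition gr_single :: "'g \<Rightarrow> 'r::zero \<Rightarrow> ('g \<Rightarrow> 'r)" where
  "gr_single x a = (\<lambda>z. if z = x then a else 0)"

definition gr_mult :: "('g, 'b) monoid_scheme \<Rightarrow> ('g \<Rightarrow> 'r::comm_ring_1) \<Rightarrow> ('g \<Rightarrow> 'r) \<Rightarrow> ('g \<Rightarrow> 'r)" where
  "gr_mult G a b = (\<lambda>z. \<Sum>p\<in>{(u, v). u \<in> carrier G \<and> v \<in> carrier G \<and> a u \<noteq> 0 \<and> b v \<noteq> 0
        \<and> u \<otimes>\<^bsub>G\<^esub> v = z}. a (fst p) * b (snd p))"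

inductive_set S_span :: "('g, 'b) monoid_scheme \<Rightarrow> ('g \<Rightarrow> 'g) \<Rightarrow> ('g \<Rightarrow> 'r::comm_ring_1)
    \<Rightarrow> ('g \<Rightarrow> 'r) set"
  for G star \<sigma> where
  gen1: "\<lbrakk>x \<in> carrier G; star x = x; \<sigma> x = 1\<rbrakk> \<Longrightarrow> gr_single x 2 \<in> S_span G star \<sigma>"
| gen2: "\<lbrakk>x \<in> carrier G; star x = x; \<sigma> x \<noteq> 1; a * (1 - \<sigma> x) = 0\<rbrakk>
          \<Longrightarrow> gr_single x a \<in> S_span G star \<sigma>"
| gen3: "\<lbrakk>x \<in> carrier G; star x \<noteq> x\<rbrakk>
          \<Longrightarrow> (\<lambda>z. gr_single x 1 z + gr_single (star x) (\<sigma> x) z) \<in> S_span G star \<sigma>"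
| zero: "(\<lambda>_. 0) \<in> S_span G star \<sigma>"
| add: "\<lbrakk>a \<in> S_span G star \<sigma>; b \<in> S_span G star \<sigma>\<rbrakk> \<Longrightarrow> (\<lambda>z. a z + b z) \<in> S_span G star \<sigma>"
| smult: "a \<in> S_span G star \<sigma> \<Longrightarrow> (\<lambda>z. c * a z) \<in> S_span G star \<sigma>"

definition anticommutative :: "('g, 'b) monoid_scheme \<Rightarrow> ('g \<Rightarrow> 'r::comm_ring_1) set \<Rightarrow> bool" where
  "anticommutative G S \<longleftrightarrow> (\<forall>a\<in>S. \<forall>b\<in>S. (\<lambda>z. gr_mult G a b z + gr_mult G b a z) = (\<lambda>_. 0))"

definition gcomm :: "('g, 'b) monoid_scheme \<Rightarrow> 'g \<Rightarrow> 'g \<Rightarrow> 'g" where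
  "gcomm G x y = inv\<^bsub>G\<^esub> x \<otimes>\<^bsub>G\<^esub> inv\<^bsub>G\<^esub> y \<otimes>\<^bsub>G\<^esub> x \<otimes>\<^bsub>G\<^esub> y"

end

theory Submission
  imports Defs
begin

text \<open>
  For self-adjoint \<open>x\<close>, \<open>y\<close> we have \<open>(xy)\<^sup>* = yx\<close>, which gives (i). Part (ii) is the
  coefficient of \<open>xy\<close> in \<open>(\<alpha>x)(\<beta>y) + (\<beta>y)(\<alpha>x) = 0\<close>. For (iii), assume \<open>xy \<noteq> yx\<close>, so
  that \<open>s = xy + \<sigma>(xy) yx \<in> \<S>\<^sub>3\<close>, while \<open>q = y\<^sup>2\<close> lies in \<open>N\<^sub>*\<close>, so \<open>2q \<in> \<S>\<close>.
  The coefficient of \<open>q xy\<close> in \<open>(2q)s + s(2q) = 0\<close> is \<open>2 + 2 s(q xy q\<inverse>)\<close>; since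
  \<open>2 \<noteq> 0\<close>, the conjugate \<open>q xy q\<inverse>\<close> must lie in the support \<open>{xy, yx}\<close> of \<open>s\<close>, and either
  possibility forces \<open>q\<close> to commute with \<open>x\<close>. Exchanging \<open>x\<close> and \<open>y\<close> gives the
  statement for \<open>x\<^sup>2\<close>.
\<close>

lemma (in group) gr_mult_single_left:
  assumes "u \<in> carrier G" "z \<in> carrier G"
  shows "gr_mult G (gr_single u a) b z = a * b (inv u \<otimes> z)"
proof -
  have "{(u', v). u' \<in> carrier G \<and> v \<in> carrier G \<and> gr_single u a u' \<noteq> 0 \<and> b v \<noteq> 0 \<and> u' \<otimes> v = z}
      = (if a \<noteq> 0 \<and> b (inv u \<otimes> z) \<noteq> 0 then {(u, inv u \<otimes> z)} else {})"
    using assms by (auto simp: gr_single_def inv_solve_left m_assoc[symmetric] split: if_splits)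
  then show ?thesis
    by (simp add: gr_mult_def gr_single_def)
qed

lemma (in group) gr_mult_single_right:
  assumes "v \<in> carrier G" "z \<in> carrier G"
  shows "gr_mult G a (gr_single v b) z = a (z \<otimes> inv v) * b"
proof -
  have "{(u, v'). u \<in> carrier G \<and> v' \<in> carrier G \<and> a u \<noteq> 0 \<and> gr_single v b v' \<noteq> 0 \<and> u \<otimes> v' = z}
      = (if a (z \<otimes> inv v) \<noteq> 0 \<and> b \<noteq> 0 then {(z \<otimes> inv v, v)} else {})"
    using assms by (auto simp: gr_single_def inv_solve_right m_assoc split: if_splits)
  then show ?thesis
    by (simp add: gr_mult_def gr_single_def)
qed

lemma (in group) gr_mult_single_single:
  assumes "u \<in> carrier G" "v \<in> carrier G" "z \<in> carrier G"
  shows "gr_mult G (gr_single u a) (gr_single v b) z = (if u \<otimes> v = z then a * b else 0)"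
proof -
  have "inv u \<otimes> z = v \<longleftrightarrow> u \<otimes> v = z"
    using assms by (auto simp: inv_solve_left m_assoc[symmetric])
  then show ?thesis
    using assms by (simp add: gr_mult_single_left) (simp add: gr_single_def)
qed

lemma anticommutativeD:
  assumes "anticommutative G S" "a \<in> S" "b \<in> S"
  shows "gr_mult G a b z + gr_mult G b a z = 0"
  using assms unfolding anticommutative_def by metis

lemma (in group) gcomm_eq_one:
  assumes "a \<in> carrier G" "b \<in> carrier G" "a \<otimes> b = b \<otimes> a"
  shows "gcomm G a b = \<one>"
  using assms by (simp add: gcomm_def m_assoc inv_mult_group[symmetric])

lemma (in group) commute_square_of_conj:
  assumes x: "x \<in> carrier G" and y: "y \<in> carrier G"
    and conj: "(y \<otimes> y) \<otimes> (x \<otimes> y) \<otimes> inv (y \<otimes> y) \<in> {x \<otimes> y, y \<otimes> x}"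
  shows "x \<otimes> (y \<otimes> y) = (y \<otimes> y) \<otimes> x"
proof -
  have "(y \<otimes> y) \<otimes> (x \<otimes> y) = x \<otimes> y \<otimes> (y \<otimes> y) \<or> (y \<otimes> y) \<otimes> (x \<otimes> y) = y \<otimes> x \<otimes> (y \<otimes> y)"
    using conj x y by (auto simp: inv_solve_right')
  then show ?thesis
  proof
    assume "(y \<otimes> y) \<otimes> (x \<otimes> y) = x \<otimes> y \<otimes> (y \<otimes> y)"
    then have "((y \<otimes> y) \<otimes> x) \<otimes> y = (x \<otimes> (y \<otimes> y)) \<otimes> y"
      using x y by (simp add: m_assoc)
    then show ?thesis using x y by simp
  next
    assume "(y \<otimes> y) \<otimes> (x \<otimes> y) = y \<otimes> x \<otimes> (y \<otimes> y)"
    then have "y \<otimes> ((y \<otimes> x) \<otimes> y) = y \<otimes> ((x \<otimes> y) \<otimes> y)"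
      using x y by (simp add: m_assoc)
    then have "x \<otimes> y = y \<otimes> x" using x y by simp
    then show ?thesis using x y by (metis m_assoc)
  qed
qed

lemma (in group) conj_in_support_of_gen3:
  fixes star :: "'a \<Rightarrow> 'a" and \<sigma> :: "'a \<Rightarrow> 'r::comm_ring_1"
  assumes two: "(2::'r) \<noteq> 0"
    and anti: "anticommutative G (S_span G star \<sigma>)"
    and g: "g \<in> carrier G" "star g \<noteq> g"
    and q: "q \<in> carrier G" "star q = q" "\<sigma> q = 1"
  shows "q \<otimes> g \<otimes> inv q \<in> {g, star g}"
proof (rule ccontr)
  assume outside: "q \<otimes> g \<otimes> inv q \<notin> {g, star g}"
  define s where "s = (\<lambda>z. gr_single g 1 z + gr_single (star g) (\<sigma> g) z)"
  have "s \<in> S_span G star \<sigma>"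
    unfolding s_def using g by (rule S_span.gen3)
  moreover have "gr_single q 2 \<in> S_span G star \<sigma>"
    using q by (rule S_span.gen1)
  ultimately have "gr_mult G (gr_single q 2) s (q \<otimes> g) + gr_mult G s (gr_single q 2) (q \<otimes> g) = 0"
    using anti by (blast intro: anticommutativeD)
  moreover have "gr_mult G (gr_single q 2) s (q \<otimes> g) = 2 * s g"
    using g q by (simp add: gr_mult_single_left m_assoc[symmetric])
  moreover have "gr_mult G s (gr_single q 2) (q \<otimes> g) = s (q \<otimes> g \<otimes> inv q) * 2"
    using g q by (simp add: gr_mult_single_right)
  moreover have "s g = 1" "s (q \<otimes> g \<otimes> inv q) = 0"
    using g outside by (auto simp: s_def gr_single_def)
  ultimately show False
    using two by simp
qed

lemma (in group) self_adjoint_commute_square: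
  fixes star :: "'a \<Rightarrow> 'a" and \<sigma> :: "'a \<Rightarrow> 'r::comm_ring_1"
  assumes two: "(2::'r) \<noteq> 0"
    and star_mult: "\<And>g h. g \<in> carrier G \<Longrightarrow> h \<in> carrier G \<Longrightarrow> star (g \<otimes> h) = star h \<otimes> star g"
    and sigma_compat: "\<And>g. g \<in> carrier G \<Longrightarrow> \<sigma> (g \<otimes> star g) = 1"
    and anti: "anticommutative G (S_span G star \<sigma>)"
    and x: "x \<in> carrier G" "star x = x"
    and y: "y \<in> carrier G" "star y = y"
  shows "x \<otimes> (y \<otimes> y) = (y \<otimes> y) \<otimes> x"
proof (cases "x \<otimes> y = y \<otimes> x")
  case True
  then show ?thesis using x y by (metis m_assoc)
next
  case False
  have star_xy: "star (x \<otimes> y) = y \<otimes> x"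
    using star_mult x y by simp
  have "star (y \<otimes> y) = y \<otimes> y" "\<sigma> (y \<otimes> y) = 1"
    using star_mult y sigma_compat[OF y(1)] by simp_all
  then have "(y \<otimes> y) \<otimes> (x \<otimes> y) \<otimes> inv (y \<otimes> y) \<in> {x \<otimes> y, y \<otimes> x}"
    using conj_in_support_of_gen3[OF two anti, of "x \<otimes> y" "y \<otimes> y"] False star_xy x y by auto
  then show ?thesis
    by (rule commute_square_of_conj[OF x(1) y(1)])
qed

theorem lemma3p10:
  fixes G :: "('g, 'b) monoid_scheme" and star :: "'g \<Rightarrow> 'g"
    and \<sigma> :: "'g \<Rightarrow> 'r::comm_ring_1" and x y :: 'g and \<alpha> \<beta> :: 'r
  assumes grp: "group G"
    and char: "(2::'r) \<noteq> 0"
    and star_closed: "\<And>g. g \<in> carrier G \<Longrightarrow> star g \<in> carrier G"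
    and star_mult: "\<And>g h. g \<in> carrier G \<Longrightarrow> h \<in> carrier G \<Longrightarrow>
        star (g \<otimes>\<^bsub>G\<^esub> h) = star h \<otimes>\<^bsub>G\<^esub> star g"
    and star_star: "\<And>g. g \<in> carrier G \<Longrightarrow> star (star g) = g"
    and sigma_unit: "\<And>g. g \<in> carrier G \<Longrightarrow> \<sigma> g dvd 1"
    and sigma_hom: "\<And>g h. g \<in> carrier G \<Longrightarrow> h \<in> carrier G \<Longrightarrow>
        \<sigma> (g \<otimes>\<^bsub>G\<^esub> h) = \<sigma> g * \<sigma> h"
    and sigma_nontriv: "\<exists>g\<in>carrier G. \<sigma> g \<noteq> 1"
    and sigma_compat: "\<And>g. g \<in> carrier G \<Longrightarrow> \<sigma> (g \<otimes>\<^bsub>G\<^esub> star g) = 1"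
    and anti: "anticommutative G (S_span G star \<sigma>)"
    and x: "x \<in> carrier G" "star x = x"
    and y: "y \<in> carrier G" "star y = y"
    and ax: "gr_single x \<alpha> \<in> S_span G star \<sigma>"
    and by': "gr_single y \<beta> \<in> S_span G star \<sigma>"
  shows "(x \<otimes>\<^bsub>G\<^esub> y = y \<otimes>\<^bsub>G\<^esub> x \<longleftrightarrow> star (x \<otimes>\<^bsub>G\<^esub> y) = x \<otimes>\<^bsub>G\<^esub> y)
    \<and> (x \<otimes>\<^bsub>G\<^esub> y \<noteq> y \<otimes>\<^bsub>G\<^esub> x \<longrightarrow> \<alpha> * \<beta> = 0)
    \<and> (x \<otimes>\<^bsub>G\<^esub> y = y \<otimes>\<^bsub>G\<^esub> x \<longrightarrow> 2 * \<alpha> * \<beta> = 0)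
    \<and> gcomm G x (y \<otimes>\<^bsub>G\<^esub> y) = \<one>\<^bsub>G\<^esub>
    \<and> gcomm G (x \<otimes>\<^bsub>G\<^esub> x) y = \<one>\<^bsub>G\<^esub>"
proof -
  interpret group G by (rule grp)
  have star_xy: "star (x \<otimes>\<^bsub>G\<^esub> y) = y \<otimes>\<^bsub>G\<^esub> x"
    using star_mult x y by simp
  have "gr_mult G (gr_single x \<alpha>) (gr_single y \<beta>) (x \<otimes>\<^bsub>G\<^esub> y)
      + gr_mult G (gr_single y \<beta>) (gr_single x \<alpha>) (x \<otimes>\<^bsub>G\<^esub> y) = 0"
    using anti ax by' by (rule anticommutativeD)
  then have coeff: "\<alpha> * \<beta> + (if y \<otimes>\<^bsub>G\<^esub> x = x \<otimes>\<^bsub>G\<^esub> y then \<beta> * \<alpha> else 0) = 0"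
    using x y by (simp add: gr_mult_single_single)
  have "x \<otimes>\<^bsub>G\<^esub> (y \<otimes>\<^bsub>G\<^esub> y) = (y \<otimes>\<^bsub>G\<^esub> y) \<otimes>\<^bsub>G\<^esub> x"
    "y \<otimes>\<^bsub>G\<^esub> (x \<otimes>\<^bsub>G\<^esub> x) = (x \<otimes>\<^bsub>G\<^esub> x) \<otimes>\<^bsub>G\<^esub> y"
    using self_adjoint_commute_square[OF char star_mult sigma_compat anti] x y by auto
  then have "gcomm G x (y \<otimes>\<^bsub>G\<^esub> y) = \<one>\<^bsub>G\<^esub>" "gcomm G (x \<otimes>\<^bsub>G\<^esub> x) y = \<one>\<^bsub>G\<^esub>"
    using x y by (simp_all add: gcomm_eq_one)
  moreover have "2 * \<alpha> * \<beta> = \<alpha> * \<beta> + \<beta> * \<alpha>"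
    by (simp add: mult_2 mult.commute)
  ultimately show ?thesis
    using star_xy coeff by (auto simp: mult.assoc)
qed

end
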